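(* Let $p$ be an odd prime. If $n>m$ and $n-m$ is divisible by $2p-2$, then $$\frac{\Phi_n}{\Phi_m}\equiv\Phi_{n-m}\pmod{p^{1+\nu_p(n-m)}},$$ i.e. $\Phi_n/\Phi_m-\Phi_{n-m}\in p^{1+\nu_p(n-m)}A$, where $\nu_p$ denotes the $p$-adic valuation.
   Context: $A$ is the ring of degree zero stable operations in $p$-local complex $K$-theory. Fix $q$ primitive mod $p^2$, $\Psi^q\in A$ the Adams operation, $q_i=q^{(-1)^i\lfloor i/2\rfloor}$ for $i\ge1$, $\Theta_n(X)=\prod_{i=1}^n(X-q_i)$, and $\Phi_n=\Theta_n(\Psi^q)\in A$. For $n>m$, $\Theta_m(X)$ divides $\Theta_n(X)$, and $\Phi_n/\Phi_m$ denotes the value at $\Psi^q$ of the polynomial $\Theta_n(X)/\Theta_m(X)$. *)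

theory Defs
  imports "HOL-Number_Theory.Number_Theory" "HOL-Computational_Algebra.Polynomial"
begin

definition in_Zp :: "nat \<Rightarrow> rat \<Rightarrow> bool" where
  "in_Zp p r \<longleftrightarrow> (\<exists>a b :: int. b \<noteq> 0 \<and> \<not> int p dvd b \<and> r = of_int a / of_int b)"

(* A Laurent polynomial w^(-N) g(w) in Q[w,w^-1], represented by (g, N), evaluated at x *)
definition lev :: "rat poly \<Rightarrow> nat \<Rightarrow> rat \<Rightarrow> rat" where
  "lev g N x = poly g x / x ^ N"

(* K_0(K)_(p): Laurent polynomials f with f(k) in Z_(p) for all integers k prime to p
   (Adams-Harris-Switzer, localized at p) *)
definition K0K :: "nat \<Rightarrow> (rat poly \<times> nat) set" where
  "K0K p = {(g, N). \<forall>k::int. \<not> int p dvd k \<longrightarrow> in_Zp p (lev g N (of_int k))}"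

(* The operation P(Psi^q) in A = Hom(K_0(K)_(p), Z_(p)) acts as the functional
   f \<mapsto> \<Sum>_i c_i f(q^i), since Psi^(q^i) is evaluation at q^i. *)
definition act :: "int \<Rightarrow> rat poly \<Rightarrow> rat poly \<times> nat \<Rightarrow> rat" where
  "act q P f = (\<Sum>i\<le>degree P. coeff P i * lev (fst f) (snd f) (of_int q ^ i))"

definition in_pkA :: "nat \<Rightarrow> nat \<Rightarrow> int \<Rightarrow> rat poly \<Rightarrow> bool" where
  "in_pkA p k q P \<longleftrightarrow> (\<forall>f \<in> K0K p. in_Zp p (act q P f / of_nat p ^ k))"

definition qi :: "int \<Rightarrow> nat \<Rightarrow> rat" where
  "qi q i = (if even i then of_int q ^ (i div 2) else inverse (of_int q ^ (i div 2)))"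

definition Theta :: "int \<Rightarrow> nat \<Rightarrow> rat poly" where
  "Theta q n = (\<Prod>i\<in>{1..n}. [:- qi q i, 1:])"

definition primitive_mod :: "nat \<Rightarrow> int \<Rightarrow> bool" where
  "primitive_mod m q \<longleftrightarrow> residue_primroot m (nat (q mod int m))"

end

theory Submission
  imports Defs
begin

text \<open>
  Write d = n - m = 2h and \<nu> = \<nu>_p(d). The quotient \<Theta>_n / \<Theta>_m = \<Prod>_{i=m+1..n} (X - q_i) is a
  window of d consecutive factors, and \<Theta>_d is the window starting at 1. Sliding a window one
  step to the right replaces the factor X - q_j by X - q_{j+d}, which changes the product by
  (q_j - q_{j+d}) times a polynomial with p-local integral coefficients. Now q_{j+2h} = q_j q^{\<plusminus>h},
  and (2p - 2) | d makes \<phi>(p^{1+\<nu>}) = p^\<nu> (p - 1) divide h, so by Euler's theorem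
  q_{j+d} \<equiv> q_j mod p^{1+\<nu>}. Telescoping, every coefficient of \<Theta>_n / \<Theta>_m - \<Theta>_d lies in
  p^{1+\<nu>} \<int>_(p), and an operation P(\<Psi>^q) only evaluates Laurent polynomials at the p-local
  units q^i.
\<close>

lemma in_Zp_of_int [simp]: "prime p \<Longrightarrow> in_Zp p (of_int a)"
  unfolding in_Zp_def by (intro exI[of _ a] exI[of _ 1]) (auto simp: prime_nat_iff)

lemma in_Zp_0 [simp]: "prime p \<Longrightarrow> in_Zp p 0"
  using in_Zp_of_int[of p 0] by simp

lemma in_Zp_1 [simp]: "prime p \<Longrightarrow> in_Zp p 1"
  using in_Zp_of_int[of p 1] by simp

lemma in_Zp_inverse_of_int: "\<not> int p dvd b \<Longrightarrow> in_Zp p (inverse (of_int b))"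
  unfolding in_Zp_def by (intro exI[of _ 1] exI[of _ b]) (auto simp: divide_inverse)

lemma in_Zp_minus: "in_Zp p x \<Longrightarrow> in_Zp p (- x)"
  unfolding in_Zp_def by (metis minus_divide_left of_int_minus)

lemma in_Zp_add:
  assumes "prime p" "in_Zp p x" "in_Zp p y"
  shows "in_Zp p (x + y)"
proof -
  obtain a b where ab: "b \<noteq> 0" "\<not> int p dvd b" "x = of_int a / of_int b"
    using assms(2) unfolding in_Zp_def by blast
  obtain c d where cd: "d \<noteq> 0" "\<not> int p dvd d" "y = of_int c / of_int d"
    using assms(3) unfolding in_Zp_def by blast
  have "\<not> int p dvd b * d"
    using ab cd assms(1) by (simp add: prime_dvd_mult_iff)
  moreover have "x + y = of_int (a * d + c * b) / of_int (b * d)"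
    using ab cd by (simp add: field_simps)
  ultimately show ?thesis
    unfolding in_Zp_def using ab cd by (intro exI[of _ "a * d + c * b"] exI[of _ "b * d"]) auto
qed

lemma in_Zp_mult:
  assumes "prime p" "in_Zp p x" "in_Zp p y"
  shows "in_Zp p (x * y)"
proof -
  obtain a b where ab: "b \<noteq> 0" "\<not> int p dvd b" "x = of_int a / of_int b"
    using assms(2) unfolding in_Zp_def by blast
  obtain c d where cd: "d \<noteq> 0" "\<not> int p dvd d" "y = of_int c / of_int d"
    using assms(3) unfolding in_Zp_def by blast
  have "\<not> int p dvd b * d"
    using ab cd assms(1) by (simp add: prime_dvd_mult_iff)
  moreover have "x * y = of_int (a * c) / of_int (b * d)"
    using ab cd by simp
  ultimately show ?thesis
    unfolding in_Zp_def using ab cd by (intro exI[of _ "a * c"] exI[of _ "b * d"]) auto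
qed

lemma in_Zp_sum: "prime p \<Longrightarrow> (\<And>i. i \<in> S \<Longrightarrow> in_Zp p (f i)) \<Longrightarrow> in_Zp p (sum f S)"
  by (induction S rule: infinite_finite_induct) (auto intro: in_Zp_add)

lemma in_Zp_inverse_power:
  assumes "prime p" "\<not> int p dvd q"
  shows "in_Zp p (inverse (of_int q ^ j))"
proof -
  have "\<not> int p dvd q ^ j"
    using assms prime_dvd_power[of "int p" q j] by auto
  then show ?thesis
    using in_Zp_inverse_of_int[of p "q ^ j"] by simp
qed

lemma in_Zp_qi: "prime p \<Longrightarrow> \<not> int p dvd q \<Longrightarrow> in_Zp p (qi q i)"
  using in_Zp_of_int[of p "q ^ (i div 2)"] by (auto simp: qi_def in_Zp_inverse_power)

definition coeffs_in_pkZp :: "nat \<Rightarrow> nat \<Rightarrow> rat poly \<Rightarrow> bool" where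
  "coeffs_in_pkZp p k P \<longleftrightarrow> (\<forall>i. in_Zp p (coeff P i / of_nat p ^ k))"

lemma coeffs_in_pkZp_add:
  "prime p \<Longrightarrow> coeffs_in_pkZp p k P \<Longrightarrow> coeffs_in_pkZp p k Q \<Longrightarrow> coeffs_in_pkZp p k (P + Q)"
  unfolding coeffs_in_pkZp_def by (auto simp: add_divide_distrib intro: in_Zp_add)

lemma coeffs_in_pkZp_mult:
  assumes "prime p" "coeffs_in_pkZp p k P" "coeffs_in_pkZp p l Q"
  shows "coeffs_in_pkZp p (k + l) (P * Q)"
  unfolding coeffs_in_pkZp_def
proof
  fix n
  have "coeff (P * Q) n / of_nat p ^ (k + l)
      = (\<Sum>i\<le>n. (coeff P i / of_nat p ^ k) * (coeff Q (n - i) / of_nat p ^ l))"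
    by (simp add: coeff_mult sum_divide_distrib power_add)
  also have "in_Zp p \<dots>"
    using assms unfolding coeffs_in_pkZp_def by (intro in_Zp_sum in_Zp_mult) auto
  finally show "in_Zp p (coeff (P * Q) n / of_nat p ^ (k + l))" .
qed

lemma coeffs_in_pkZp_prod:
  "prime p \<Longrightarrow> (\<And>i. i \<in> S \<Longrightarrow> coeffs_in_pkZp p 0 (f i)) \<Longrightarrow> coeffs_in_pkZp p 0 (prod f S)"
proof (induction S rule: infinite_finite_induct)
  case (insert x F)
  then show ?case
    using coeffs_in_pkZp_mult[of p 0 "f x" 0 "prod f F"] by simp
qed (auto simp: coeffs_in_pkZp_def)

lemma coeffs_in_pkZp_monic_linear: "prime p \<Longrightarrow> in_Zp p a \<Longrightarrow> coeffs_in_pkZp p 0 [:- a, 1:]"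
  unfolding coeffs_in_pkZp_def
  by (auto simp: coeff_pCons in_Zp_minus split: nat.split)

lemma coeffs_in_pkZp_const: "prime p \<Longrightarrow> in_Zp p (c / of_nat p ^ k) \<Longrightarrow> coeffs_in_pkZp p k [:c:]"
  unfolding coeffs_in_pkZp_def
  by (auto simp: coeff_pCons split: nat.split)

lemma in_pkA_if_coeffs_in_pkZp:
  assumes "prime p" "\<not> int p dvd q" "coeffs_in_pkZp p k P"
  shows "in_pkA p k q P"
  unfolding in_pkA_def
proof
  fix f assume f: "f \<in> K0K p"
  obtain g N where gN: "f = (g, N)" by (cases f)
  have lev_Zp_int: "\<forall>k::int. \<not> int p dvd k \<longrightarrow> in_Zp p (lev g N (of_int k))"
    using f unfolding gN K0K_def by simp
  have lev_Zp: "in_Zp p (lev g N (of_int q ^ i))" for i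
    using lev_Zp_int[rule_format, of "q ^ i"] assms(1,2) prime_dvd_power[of "int p" q i] by auto
  have "act q P f / of_nat p ^ k = (\<Sum>i\<le>degree P. (coeff P i / of_nat p ^ k) * lev g N (of_int q ^ i))"
    unfolding act_def gN by (simp add: sum_divide_distrib)
  also have "in_Zp p \<dots>"
    using assms(3) lev_Zp unfolding coeffs_in_pkZp_def by (intro in_Zp_sum in_Zp_mult assms(1)) auto
  finally show "in_Zp p (act q P f / of_nat p ^ k)" .
qed

lemma prod_window_step:
  fixes a :: "nat \<Rightarrow> 'a::comm_ring_1"
  assumes "d > 0"
  shows "(\<Prod>i\<in>{j+2..j+1+d}. [:- a i, 1:]) - (\<Prod>i\<in>{j+1..j+d}. [:- a i, 1:])
    = [:a (j+1) - a (j+1+d):] * (\<Prod>i\<in>{j+2..j+d}. [:- a i, 1:])"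
proof -
  have "{j+2..j+1+d} = insert (j+1+d) {j+2..j+d}" "{j+1..j+d} = insert (j+1) {j+2..j+d}"
    using assms by auto
  then have "(\<Prod>i\<in>{j+2..j+1+d}. [:- a i, 1:]) - (\<Prod>i\<in>{j+1..j+d}. [:- a i, 1:])
      = ([:- a (j+1+d), 1:] - [:- a (j+1), 1:]) * (\<Prod>i\<in>{j+2..j+d}. [:- a i, 1:])"
    by (simp only: prod.insert finite_atLeastAtMost atLeastAtMost_iff left_diff_distrib) simp
  also have "[:- a (j+1+d), 1:] - [:- a (j+1), 1:] = [:a (j+1) - a (j+1+d):]"
    by simp
  finally show ?thesis .
qed

lemma coeffs_in_pkZp_prod_window_shift:
  fixes a :: "nat \<Rightarrow> rat"
  assumes "prime p" "\<And>i. in_Zp p (a i)" "\<And>i. in_Zp p ((a i - a (i + d)) / of_nat p ^ k)"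
  shows "coeffs_in_pkZp p k ((\<Prod>i\<in>{m+1..m+d}. [:- a i, 1:]) - (\<Prod>i\<in>{1..d}. [:- a i, 1:]))"
proof (cases "d = 0")
  case True
  then show ?thesis by (simp add: coeffs_in_pkZp_def assms(1))
next
  case False
  show ?thesis
  proof (induction m)
    case 0
    show ?case by (simp add: coeffs_in_pkZp_def assms(1))
  next
    case (Suc j)
    have "coeffs_in_pkZp p (k + 0) ([:a (j+1) - a (j+1+d):] * (\<Prod>i\<in>{j+2..j+d}. [:- a i, 1:]))"
      using assms(1,2) assms(3)[of "j+1"]
      by (intro coeffs_in_pkZp_mult coeffs_in_pkZp_const coeffs_in_pkZp_prod
          coeffs_in_pkZp_monic_linear) auto
    then have "coeffs_in_pkZp p k
        ((\<Prod>i\<in>{j+2..j+1+d}. [:- a i, 1:]) - (\<Prod>i\<in>{j+1..j+d}. [:- a i, 1:]))"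
      using prod_window_step[of d a j] False by simp
    from coeffs_in_pkZp_add[OF assms(1) this Suc.IH] show ?case
      by (simp add: add_ac)
  qed
qed

lemma qi_add_even: "qi q (i + 2 * h) = qi q i * (if even i then of_int q ^ h else inverse (of_int q ^ h))"
proof -
  have "(i + 2 * h) div 2 = i div 2 + h" "even (i + 2 * h) \<longleftrightarrow> even i"
    by auto
  then show ?thesis
    by (simp add: qi_def power_add)
qed

lemma qi_shift_congruent:
  assumes "prime p" "\<not> int p dvd q" "int p ^ k dvd q ^ h - 1"
  shows "in_Zp p ((qi q i - qi q (i + 2 * h)) / of_nat p ^ k)"
proof -
  obtain t where "q ^ h - 1 = int p ^ k * t"
    using assms(3) ..
  then have t: "of_int q ^ h - 1 = of_nat p ^ k * (of_int t :: rat)"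
    by (metis of_int_1 of_int_diff of_int_mult of_int_of_nat_eq of_int_power)
  have pk: "of_nat p ^ k \<noteq> (0 :: rat)" and "of_int q ^ h \<noteq> (0 :: rat)"
    using assms(1,2) prime_gt_0_nat by auto
  then have "qi q i - qi q (i + 2 * h)
      = qi q i * (of_int q ^ h - 1) * (if even i then - 1 else inverse (of_int q ^ h))"
    unfolding qi_add_even by (auto simp: field_simps)
  also have "\<dots> = of_nat p ^ k * (qi q i * of_int t * (if even i then - 1 else inverse (of_int q ^ h)))"
    unfolding t by (simp only: mult_ac)
  finally have "(qi q i - qi q (i + 2 * h)) / of_nat p ^ k
      = qi q i * of_int t * (if even i then - 1 else inverse (of_int q ^ h))"
    using pk by simp
  then show ?thesis
    using assms(1,2) by (auto intro!: in_Zp_mult in_Zp_minus in_Zp_qi in_Zp_inverse_power)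
qed

lemma coprime_if_primitive_mod:
  assumes "m > 0" "primitive_mod m q"
  shows "coprime q (int m)"
proof -
  have "coprime (int m) (int (nat (q mod int m)))"
    using assms(2) unfolding primitive_mod_def residue_primroot_def coprime_int_iff by simp
  then have "coprime (int m) (q mod int m)"
    using assms(1) by simp
  then show ?thesis
    using assms(1) by (simp add: coprime_commute)
qed

lemma power_totient_cong_one_int:
  fixes q :: int
  assumes "coprime q (int M)" "totient M dvd h"
  shows "[q ^ h = 1] (mod int M)"
proof -
  obtain j where h: "h = totient M * j"
    using assms(2) ..
  have "[q ^ totient M = 1] (mod int M)"
  proof (cases "M > 1")
    case True
    then have "residues (int M)"
      by (simp add: residues_def)
    from residues.euler_theorem[OF this assms(1)] show ?thesis
      by simp
  next
    case False
    then have "M = 0 \<or> M = 1"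
      by auto
    then show ?thesis
      by auto
  qed
  then have "[(q ^ totient M) ^ j = 1 ^ j] (mod int M)"
    by (rule cong_pow)
  then show ?thesis
    by (simp add: h power_mult)
qed

lemma two_totient_prime_power_multiplicity_dvd:
  assumes "prime p" "odd p" "(2 * p - 2) dvd d"
  shows "2 * totient (p ^ Suc (multiplicity p d)) dvd d"
proof -
  have "p > 2"
    using assms(1,2) prime_ge_2_nat[of p] by (auto simp: le_less)
  then have "\<not> p dvd 2" "\<not> p dvd p - 1"
    by (auto dest: dvd_imp_le)
  then have "\<not> p dvd 2 * (p - 1)"
    using assms(1) by (simp add: prime_dvd_mult_iff)
  then have "coprime p (2 * (p - 1))"
    by (rule prime_imp_coprime[OF assms(1)])
  then have "coprime (p ^ multiplicity p d) (2 * (p - 1))"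
    by (simp only: coprime_power_left_iff simp_thms)
  moreover have "2 * (p - 1) dvd d"
    using assms(3) by (simp add: right_diff_distrib')
  ultimately have "p ^ multiplicity p d * (2 * (p - 1)) dvd d"
    using divides_mult[OF multiplicity_dvd] by blast
  then show ?thesis
    by (simp only: totient_prime_power_Suc[OF assms(1)] mult_ac)
qed

lemma Theta_div_Theta:
  assumes "m \<le> n"
  shows "Theta q n div Theta q m = (\<Prod>i\<in>{m+1..n}. [:- qi q i, 1:])"
proof -
  have "{1..n} = {1..m} \<union> {m+1..n}"
    using assms by auto
  then have "Theta q n = Theta q m * (\<Prod>i\<in>{m+1..n}. [:- qi q i, 1:])"
    unfolding Theta_def by (simp add: prod.union_disjoint)
  moreover have "Theta q m \<noteq> 0"
    unfolding Theta_def by simp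
  ultimately show ?thesis
    by simp
qed

theorem lemma3p7:
  fixes p n m :: nat and q :: int
  assumes "prime p" and "odd p"
    and "primitive_mod (p ^ 2) q"
    and "n > m"
    and "(2 * p - 2) dvd (n - m)"
  shows "in_pkA p (1 + multiplicity p (n - m)) q (Theta q n div Theta q m - Theta q (n - m))"
proof -
  define k where "k = 1 + multiplicity p (n - m)"
  have "coprime q (int p ^ 2)"
    using coprime_if_primitive_mod[OF _ assms(3)] assms(1) prime_gt_0_nat by simp
  then have coprime_qp: "coprime q (int p ^ k)" and p_ndvd_q: "\<not> int p dvd q"
    using assms(1) by (auto simp: prime_nat_iff)
  have "2 * totient (p ^ k) dvd n - m"
    using two_totient_prime_power_multiplicity_dvd[OF assms(1,2,5)] by (simp add: k_def)
  then obtain c where d: "n - m = 2 * (totient (p ^ k) * c)"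
    by (metis dvdE mult.assoc)
  have "[q ^ (totient (p ^ k) * c) = 1] (mod int p ^ k)"
    using power_totient_cong_one_int[of q "p ^ k" "totient (p ^ k) * c"] coprime_qp by simp
  then have "coeffs_in_pkZp p k
      ((\<Prod>i\<in>{m+1..m+(n-m)}. [:- qi q i, 1:]) - (\<Prod>i\<in>{1..n-m}. [:- qi q i, 1:]))"
    unfolding d using assms(1) p_ndvd_q
    by (intro coeffs_in_pkZp_prod_window_shift in_Zp_qi qi_shift_congruent)
      (auto simp: cong_iff_dvd_diff)
  then have "coeffs_in_pkZp p k (Theta q n div Theta q m - Theta q (n - m))"
    using assms(4) by (simp add: Theta_div_Theta) (simp add: Theta_def)
  then show ?thesis
    unfolding k_def by (rule in_pkA_if_coeffs_in_pkZp[OF assms(1) p_ndvd_q])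
qed

end
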